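(* $\mathsf{AP}(R_2,R_2)=\operatorname{Pol}(R_2,R'_2)=\mathsf{I}$.
   Context: Tuples in $\{0,1\}^4$ are written as strings $abcd$. The relations $R_1,\dots,R_5\subseteq\{0,1\}^4$ are $R_1=\{0000,1000,0100,1100,1010,0110,1001,0101,0011,1011,0111,1111\}$, $R_2=\{0000,1000,0100,1100,1010,0101,0011,1111\}$, $R_3=\{0000,1100,1010,0101,0011,1011,0111,1111\}$, $R_4=\{0000,1100,1010,0101,0011,1111\}$, $R_5=\{0000,1100,1010,0110,1001,0101,0011,1111\}$. For $R,S\subseteq\{0,1\}^4$, a Boolean function $f\colon\{0,1\}^n\to\{0,1\}$ is analogy-preserving relative to $(R,S)$ if for all $\mathbf{a},\mathbf{b},\mathbf{c},\mathbf{d}\in\{0,1\}^n$ with $(a_i,b_i,c_i,d_i)\in R$ for every $i$ and such that $(f(\mathbf{a}),f(\mathbf{b}),f(\mathbf{c}),x)\in S$ for some $x\in\{0,1\}$, we have $(f(\mathbf{a}),f(\mathbf{b}),f(\mathbf{c}),f(\mathbf{d}))\in S$; $\mathsf{AP}(R,S)$ is the set of all such functions of all arities. $S':=S\cup\{(a,b,c,d)\mid\nexists x\colon(a,b,c,x)\in S\}$, and $\operatorname{Pol}(R,S)$ is the set of Boolean functions $f$ with $f(\mathbf{a}_1,\dots,\mathbf{a}_n)\in S$ (componentwise) for all $\mathbf{a}_1,\dots,\mathbf{a}_n\in R$. $\mathsf{I}$ is the set of all Boolean functions (of all arities) that are constant or a projection. *)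

theory Defs
  imports Main
begin

text \<open>A Boolean function of arity n is represented as a pair (n, f) with f :: bool list \<Rightarrow> bool,
where only the values of f on lists of length n matter.\<close>

type_synonym tup = "bool \<times> bool \<times> bool \<times> bool"

definition t4 :: "nat \<Rightarrow> nat \<Rightarrow> nat \<Rightarrow> nat \<Rightarrow> tup" where
  "t4 a b c d = (a = 1, b = 1, c = 1, d = 1)"

definition R2 :: "tup set" where
  "R2 = {t4 0 0 0 0, t4 1 0 0 0, t4 0 1 0 0, t4 1 1 0 0,
         t4 1 0 1 0, t4 0 1 0 1, t4 0 0 1 1, t4 1 1 1 1}"

definition AP :: "tup set \<Rightarrow> tup set \<Rightarrow> (nat \<times> (bool list \<Rightarrow> bool)) set" where
  "AP R S = {(n, f). \<forall>a b c d.
      length a = n \<and> length b = n \<and> length c = n \<and> length d = n \<longrightarrow>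
      (\<forall>i<n. (a ! i, b ! i, c ! i, d ! i) \<in> R) \<longrightarrow>
      (\<exists>x. (f a, f b, f c, x) \<in> S) \<longrightarrow>
      (f a, f b, f c, f d) \<in> S}"

definition Sprime :: "tup set \<Rightarrow> tup set" where
  "Sprime S = S \<union> {(a, b, c, d). \<not> (\<exists>x. (a, b, c, x) \<in> S)}"

definition Pol :: "tup set \<Rightarrow> tup set \<Rightarrow> (nat \<times> (bool list \<Rightarrow> bool)) set" where
  "Pol R S = {(n, f). \<forall>ts :: tup list. length ts = n \<longrightarrow> set ts \<subseteq> R \<longrightarrow>
      (f (map (\<lambda>(a,b,c,d). a) ts), f (map (\<lambda>(a,b,c,d). b) ts),
       f (map (\<lambda>(a,b,c,d). c) ts), f (map (\<lambda>(a,b,c,d). d) ts)) \<in> S}"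

definition Iclone :: "(nat \<times> (bool list \<Rightarrow> bool)) set" where
  "Iclone = {(n, f). (\<exists>v. \<forall>x. length x = n \<longrightarrow> f x = v) \<or>
                     (\<exists>i<n. \<forall>x. length x = n \<longrightarrow> f x = x ! i)}"

end

theory Submission
  imports Defs
begin

text \<open>Since AP(R,S) = Pol(R,S') holds for all R and S, it suffices to determine the polymorphisms
of (R2, R2'). If f(0) = 1, the tuples (0,x,0,0) force f to be constantly 1. If f(0) = 0, the
tuples (a,0,c,c \<and> \<not>a) of R2 show that f commutes with the operation c \<and> \<not>a; then
f(1) = 0 makes f constantly 0, while f(1) = 1 makes f a Boolean homomorphism, i.e. a
projection.\<close>

lemma PolD:
  assumes "(n, f) \<in> Pol R S"
    and "length a = n" "length b = n" "length c = n" "length d = n"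
    and "\<forall>i<n. (a ! i, b ! i, c ! i, d ! i) \<in> R"
  shows "(f a, f b, f c, f d) \<in> S"
proof -
  define ts where "ts = map (\<lambda>i. (a ! i, b ! i, c ! i, d ! i)) [0..<n]"
  have "length ts = n" "set ts \<subseteq> R"
    using assms(6) by (auto simp: ts_def)
  with assms(1) have "(f (map (\<lambda>(a,b,c,d). a) ts), f (map (\<lambda>(a,b,c,d). b) ts),
      f (map (\<lambda>(a,b,c,d). c) ts), f (map (\<lambda>(a,b,c,d). d) ts)) \<in> S"
    unfolding Pol_def by blast
  moreover have "map (\<lambda>(a,b,c,d). a) ts = a" "map (\<lambda>(a,b,c,d). b) ts = b"
    "map (\<lambda>(a,b,c,d). c) ts = c" "map (\<lambda>(a,b,c,d). d) ts = d"
    using assms(2-5) by (auto simp: ts_def intro: nth_equalityI)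
  ultimately show ?thesis by simp
qed

lemma AP_eq_Pol_Sprime: "AP R S = Pol R (Sprime S)"
proof (intro set_eqI iffI)
  fix p assume "p \<in> AP R S"
  then obtain n f where p: "p = (n, f)" and AP: "(n, f) \<in> AP R S" by (cases p) auto
  show "p \<in> Pol R (Sprime S)"
    unfolding p Pol_def
  proof (intro CollectI case_prodI allI impI)
    fix ts :: "tup list" assume len: "length ts = n" and sub: "set ts \<subseteq> R"
    let ?a = "map (\<lambda>(a,b,c,d). a) ts" and ?b = "map (\<lambda>(a,b,c,d). b) ts"
    let ?c = "map (\<lambda>(a,b,c,d). c) ts" and ?d = "map (\<lambda>(a,b,c,d). d) ts"
    have "(?a ! i, ?b ! i, ?c ! i, ?d ! i) = ts ! i" if "i < n" for i
      using that len by (cases "ts ! i") simp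
    moreover have "ts ! i \<in> R" if "i < n" for i
      using that len sub by auto
    ultimately have "\<forall>i<n. (?a ! i, ?b ! i, ?c ! i, ?d ! i) \<in> R"
      by simp
    moreover have "length ?a = n" "length ?b = n" "length ?c = n" "length ?d = n"
      using len by simp_all
    ultimately have "(\<exists>x. (f ?a, f ?b, f ?c, x) \<in> S) \<longrightarrow> (f ?a, f ?b, f ?c, f ?d) \<in> S"
      using AP unfolding AP_def by blast
    then show "(f ?a, f ?b, f ?c, f ?d) \<in> Sprime S"
      unfolding Sprime_def by auto
  qed
next
  fix p assume "p \<in> Pol R (Sprime S)"
  then obtain n f where p: "p = (n, f)" and P: "(n, f) \<in> Pol R (Sprime S)" by (cases p) auto
  have "(f a, f b, f c, f d) \<in> S"
    if "length a = n" "length b = n" "length c = n" "length d = n"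
      "\<forall>i<n. (a ! i, b ! i, c ! i, d ! i) \<in> R" "\<exists>x. (f a, f b, f c, x) \<in> S" for a b c d
    using PolD[OF P that(1-5)] that(6) unfolding Sprime_def by blast
  then show "p \<in> AP R S"
    unfolding p AP_def by blast
qed

lemma boolean_hom_is_projection:
  fixes f :: "bool list \<Rightarrow> bool"
  assumes meet: "\<And>x y. length x = n \<Longrightarrow> length y = n \<Longrightarrow> f (map2 (\<and>) x y) = (f x \<and> f y)"
    and neg: "\<And>x. length x = n \<Longrightarrow> f (map Not x) = (\<not> f x)"
  shows "\<exists>i<n. \<forall>x. length x = n \<longrightarrow> f x = x ! i"
proof -
  define zero where "zero = replicate n False"
  define e where "e = (\<lambda>i. map (\<lambda>j. j = i) [0..<n])"
  have "map2 (\<and>) (map Not zero) zero = zero"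
    by (auto simp: zero_def intro: nth_equalityI)
  then have f_zero: "\<not> f zero"
    using meet[of "map Not zero" zero] neg[of zero] by (simp add: zero_def)
  have "\<exists>i<n. f (e i)"
  proof (rule ccontr)
    assume none: "\<not> (\<exists>i<n. f (e i))"
    \<comment> \<open>removing the unit vectors one at a time from the all-ones vector keeps the value True\<close>
    have "f (map (\<lambda>j. k \<le> j) [0..<n])" if "k \<le> n" for k
      using that
    proof (induction k)
      case 0
      have "map (\<lambda>j. 0 \<le> j) [0..<n] = map Not zero"
        by (auto simp: zero_def intro: nth_equalityI)
      then show ?case using neg[of zero] f_zero by (simp add: zero_def)
    next
      case (Suc k)
      have "map (\<lambda>j. Suc k \<le> j) [0..<n] = map2 (\<and>) (map (\<lambda>j. k \<le> j) [0..<n]) (map Not (e k))"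
        by (auto simp: e_def intro: nth_equalityI)
      moreover have "f (map Not (e k))"
        using neg[of "e k"] none Suc.prems by (simp add: e_def)
      ultimately show ?case
        using meet[of "map (\<lambda>j. k \<le> j) [0..<n]" "map Not (e k)"] Suc by (simp add: e_def)
    qed
    moreover have "map (\<lambda>j. n \<le> j) [0..<n] = zero"
      by (auto simp: zero_def intro: nth_equalityI)
    ultimately show False using f_zero by auto
  qed
  then obtain i where i: "i < n" "f (e i)" by auto
  have "f x = x ! i" if len: "length x = n" for x
  proof -
    have "map2 (\<and>) x (e i) = (if x ! i then e i else zero)"
      using len by (auto simp: e_def zero_def intro: nth_equalityI)
    then show ?thesis
      using meet[of x "e i"] len i f_zero by (simp add: e_def split: if_splits)
  qed
  with i show ?thesis by blast
qed

lemma and_not_preserving_const_or_projection: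
  fixes f :: "bool list \<Rightarrow> bool"
  assumes and_not: "\<And>a c. length a = n \<Longrightarrow> length c = n \<Longrightarrow>
      f (map2 (\<lambda>ci ai. ci \<and> \<not> ai) c a) = (f c \<and> \<not> f a)"
  shows "(\<forall>x. length x = n \<longrightarrow> \<not> f x) \<or> (\<exists>i<n. \<forall>x. length x = n \<longrightarrow> f x = x ! i)"
proof (cases "f (replicate n True)")
  case False
  have "map2 (\<lambda>ci ai. ci \<and> \<not> ai) (replicate n True) (map Not x) = x" if "length x = n" for x
    using that by (auto intro: nth_equalityI)
  then have "\<not> f x" if "length x = n" for x
    using and_not[of "map Not x" "replicate n True"] that False by simp
  then show ?thesis by blast
next
  case True
  have neg: "f (map Not x) = (\<not> f x)" if "length x = n" for x
  proof -
    have "map2 (\<lambda>ci ai. ci \<and> \<not> ai) (replicate n True) x = map Not x"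
      using that by (auto intro: nth_equalityI)
    then show ?thesis using and_not[of x "replicate n True"] that True by simp
  qed
  have "f (map2 (\<and>) x y) = (f x \<and> f y)" if "length x = n" "length y = n" for x y
  proof -
    have "map2 (\<lambda>ci ai. ci \<and> \<not> ai) x (map Not y) = map2 (\<and>) x y"
      using that by (auto intro: nth_equalityI)
    then show ?thesis using and_not[of "map Not y" x] that neg[of y] by simp
  qed
  with neg show ?thesis using boolean_hom_is_projection by blast
qed

lemma R2_iff:
  "(x, y, z, w) \<in> R2 \<longleftrightarrow> \<not> (\<not> x \<and> y \<and> z) \<and> (w = (z \<and> x = y) \<or> (\<not> x \<and> y \<and> \<not> z))"
  by (cases x; cases y; cases z; cases w; simp add: R2_def t4_def)

lemma Sprime_R2_iff: "(x, y, z, w) \<in> Sprime R2 \<longleftrightarrow> w = (z \<and> x = y) \<or> (\<not> x \<and> y)"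
  unfolding Sprime_def by (cases x; cases y; cases z; cases w; auto simp: R2_iff)

lemma Iclone_subset_Pol_R2: "Iclone \<subseteq> Pol R2 (Sprime R2)"
proof
  fix p assume "p \<in> Iclone"
  then obtain n f where p: "p = (n, f)"
    and "(\<exists>v. \<forall>x. length x = n \<longrightarrow> f x = v) \<or> (\<exists>i<n. \<forall>x. length x = n \<longrightarrow> f x = x ! i)"
    unfolding Iclone_def by auto
  then consider v where "\<forall>x. length x = n \<longrightarrow> f x = v"
    | i where "i < n" "\<forall>x. length x = n \<longrightarrow> f x = x ! i" by blast
  then show "p \<in> Pol R2 (Sprime R2)"
  proof cases
    case 1
    then show ?thesis unfolding p Pol_def by (auto simp: Sprime_R2_iff)
  next
    case 2
    show ?thesis
      unfolding p Pol_def
    proof (intro CollectI case_prodI allI impI)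
      fix ts :: "tup list" assume "length ts = n" "set ts \<subseteq> R2"
      with 2 have "ts ! i \<in> Sprime R2"
        unfolding Sprime_def by (auto dest: nth_mem)
      with 2 \<open>length ts = n\<close> show "(f (map (\<lambda>(a,b,c,d). a) ts), f (map (\<lambda>(a,b,c,d). b) ts),
          f (map (\<lambda>(a,b,c,d). c) ts), f (map (\<lambda>(a,b,c,d). d) ts)) \<in> Sprime R2"
        by (cases "ts ! i") auto
    qed
  qed
qed

lemma Pol_R2_const_True:
  assumes "(n, f) \<in> Pol R2 (Sprime R2)" "f (replicate n False)" "length x = n"
  shows "f x"
proof -
  have "(f (replicate n False), f x, f (replicate n False), f (replicate n False)) \<in> Sprime R2"
    using assms(3-) by (intro PolD[OF assms(1)]) (auto simp: R2_iff)
  then show ?thesis using assms(2) by (simp add: Sprime_R2_iff)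
qed

lemma Pol_R2_and_not:
  assumes "(n, f) \<in> Pol R2 (Sprime R2)" "\<not> f (replicate n False)" "length a = n" "length c = n"
  shows "f (map2 (\<lambda>ci ai. ci \<and> \<not> ai) c a) = (f c \<and> \<not> f a)"
proof -
  have "(f a, f (replicate n False), f c, f (map2 (\<lambda>ci ai. ci \<and> \<not> ai) c a)) \<in> Sprime R2"
    using assms(3-) by (intro PolD[OF assms(1)]) (auto simp: R2_iff)
  then show ?thesis using assms(2) by (simp add: Sprime_R2_iff)
qed

lemma Pol_R2_subset_Iclone: "Pol R2 (Sprime R2) \<subseteq> Iclone"
proof
  fix p assume "p \<in> Pol R2 (Sprime R2)"
  then obtain n f where p: "p = (n, f)" and P: "(n, f) \<in> Pol R2 (Sprime R2)" by (cases p) auto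
  show "p \<in> Iclone"
  proof (cases "f (replicate n False)")
    case True
    then have "\<forall>x. length x = n \<longrightarrow> f x = True"
      using Pol_R2_const_True[OF P] by blast
    then show ?thesis
      unfolding p Iclone_def by blast
  next
    case False
    have "(\<forall>x. length x = n \<longrightarrow> f x = False) \<or> (\<exists>i<n. \<forall>x. length x = n \<longrightarrow> f x = x ! i)"
      using and_not_preserving_const_or_projection[of n f] Pol_R2_and_not[OF P False] by simp
    then show ?thesis
      unfolding p Iclone_def by blast
  qed
qed

theorem mainTheorem8:
  shows "AP R2 R2 = Pol R2 (Sprime R2) \<and> Pol R2 (Sprime R2) = Iclone"
  using AP_eq_Pol_Sprime Iclone_subset_Pol_R2 Pol_R2_subset_Iclone by blast

end
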